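(* Let $(W,\prec)$ be any $\mathsf{MN}$-frame. Then: (1) $\Box p \to \Box\Box p$ is valid in $(W,\prec)$ if and only if $(W,\prec)$ is transitive; (2) $\neg\Box\bot$ is valid in $(W,\prec)$ if and only if $(W,\prec)$ is an $\mathsf{MNP}$-frame; (3) $\neg(\Box p \land \Box\neg p)$ is valid in $(W,\prec)$ if and only if $(W,\prec)$ is an $\mathsf{MND}$-frame. Here $p$ is a propositional variable.
   Context: The modal language has countably many propositional variables, the constant $\bot$, the connective $\to$ and the operator $\Box$; $\top,\neg,\land,\lor,\Diamond$ are the usual abbreviations. An $\mathsf{MN}$-frame is a pair $(W,\prec)$ where $W$ is a non-empty set and $\prec$ is a binary relation between elements of $W$ and non-empty subsets of $W$ satisfying monotonicity: if $x\prec V$ and $V\subseteq U\subseteq W$ then $x\prec U$. An $\mathsf{MN}$-model is $(W,\prec,\Vdash)$ where $(W,\prec)$ is an $\mathsf{MN}$-frame and $\Vdash$ is a relation between $W$ and formulas satisfying the usual Boolean clauses and: $x\Vdash\Box A$ iff for every $V\subseteq W$ with $x\prec V$ there is $y\in V$ with $y\Vdash A$. A formula is valid in a frame if it is forced at every point under every such satisfaction relation on the frame. The frame is transitive if whenever $x\prec V$ and for each $y\in V$ there is $U_y\subseteq W$ with $y\prec U_y$, then $x\prec\bigcup_{y\in V}U_y$. It is an $\mathsf{MNP}$-frame if for every $x\in W$ there is $V\subseteq W$ with $x\prec V$. It is an $\mathsf{MND}$-frame if for every $x\in W$ and every $V\subseteq W$, $x\prec V$ or $x\prec (W\setminus V)$.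 *)

theory Defs
  imports Main
begin

datatype fm = Var nat | Bot | Imp fm fm | Box fm

definition Neg :: "fm \<Rightarrow> fm" where "Neg A = Imp A Bot"
definition Top :: fm where "Top = Neg Bot"
definition Conj :: "fm \<Rightarrow> fm \<Rightarrow> fm" where "Conj A B = Neg (Imp A (Neg B))"
definition Disj :: "fm \<Rightarrow> fm \<Rightarrow> fm" where "Disj A B = Imp (Neg A) B"
definition Dia :: "fm \<Rightarrow> fm" where "Dia A = Neg (Box (Neg A))"

definition MN_frame :: "'w set \<Rightarrow> ('w \<Rightarrow> 'w set \<Rightarrow> bool) \<Rightarrow> bool" where
  "MN_frame W R \<longleftrightarrow> W \<noteq> {}
     \<and> (\<forall>x V. R x V \<longrightarrow> x \<in> W \<and> V \<subseteq> W \<and> V \<noteq> {})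
     \<and> (\<forall>x V U. R x V \<and> V \<subseteq> U \<and> U \<subseteq> W \<longrightarrow> R x U)"

fun forces :: "'w set \<Rightarrow> ('w \<Rightarrow> 'w set \<Rightarrow> bool) \<Rightarrow> (nat \<Rightarrow> 'w set) \<Rightarrow> 'w \<Rightarrow> fm \<Rightarrow> bool" where
  "forces W R v x (Var n) \<longleftrightarrow> x \<in> v n"
| "forces W R v x Bot \<longleftrightarrow> False"
| "forces W R v x (Imp A B) \<longleftrightarrow> (forces W R v x A \<longrightarrow> forces W R v x B)"
| "forces W R v x (Box A) \<longleftrightarrow> (\<forall>V. V \<subseteq> W \<and> R x V \<longrightarrow> (\<exists>y\<in>V. forces W R v y A))"

definition valid_in_frame :: "'w set \<Rightarrow> ('w \<Rightarrow> 'w set \<Rightarrow> bool) \<Rightarrow> fm \<Rightarrow> bool" where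
  "valid_in_frame W R A \<longleftrightarrow> (\<forall>v. \<forall>x\<in>W. forces W R v x A)"

definition transitive_frame :: "'w set \<Rightarrow> ('w \<Rightarrow> 'w set \<Rightarrow> bool) \<Rightarrow> bool" where
  "transitive_frame W R \<longleftrightarrow>
     (\<forall>x V U. R x V \<and> (\<forall>y\<in>V. U y \<subseteq> W \<and> R y (U y)) \<longrightarrow> R x (\<Union>y\<in>V. U y))"

definition MNP_frame :: "'w set \<Rightarrow> ('w \<Rightarrow> 'w set \<Rightarrow> bool) \<Rightarrow> bool" where
  "MNP_frame W R \<longleftrightarrow> (\<forall>x\<in>W. \<exists>V. V \<subseteq> W \<and> R x V)"

definition MND_frame :: "'w set \<Rightarrow> ('w \<Rightarrow> 'w set \<Rightarrow> bool) \<Rightarrow> bool" where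
  "MND_frame W R \<longleftrightarrow> (\<forall>x\<in>W. \<forall>V. V \<subseteq> W \<longrightarrow> R x V \<or> R x (W - V))"

end

theory Submission
  imports Defs
begin

text \<open>By monotonicity, \<open>x \<Vdash> \<box>A\<close> holds exactly when the complement of the truth set of \<open>A\<close> is
  not a neighbourhood of \<open>x\<close>. This turns each of the three schemata into a condition on
  neighbourhoods of subsets of \<open>W\<close>: since the truth set of \<open>p\<close> can be any subset of \<open>W\<close>, validity
  of the schema is equivalent to that condition, which in turn matches the frame property.\<close>

lemma forces_Neg [simp]: "forces W R v x (Neg A) \<longleftrightarrow> \<not> forces W R v x A"
  by (simp add: Neg_def)

lemma forces_Conj [simp]:
  "forces W R v x (Conj A B) \<longleftrightarrow> forces W R v x A \<and> forces W R v x B"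
  by (simp add: Conj_def)

lemma MN_frame_mono: "MN_frame W R \<Longrightarrow> R x V \<Longrightarrow> V \<subseteq> U \<Longrightarrow> U \<subseteq> W \<Longrightarrow> R x U"
  unfolding MN_frame_def by blast

lemma MN_frame_subset: "MN_frame W R \<Longrightarrow> R x V \<Longrightarrow> V \<subseteq> W"
  unfolding MN_frame_def by blast

lemma MN_frame_in_carrier: "MN_frame W R \<Longrightarrow> R x V \<Longrightarrow> x \<in> W"
  unfolding MN_frame_def by blast

lemma MN_frame_nonempty: "MN_frame W R \<Longrightarrow> R x V \<Longrightarrow> V \<noteq> {}"
  unfolding MN_frame_def by blast

lemma forces_Box_MN_frame:
  assumes mn: "MN_frame W R"
  shows "forces W R v x (Box A) \<longleftrightarrow> \<not> R x {y \<in> W. \<not> forces W R v y A}"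
    (is "_ \<longleftrightarrow> \<not> R x ?refuters")
proof
  assume "forces W R v x (Box A)"
  then have "R x ?refuters \<Longrightarrow> \<exists>y \<in> ?refuters. forces W R v y A"
    unfolding forces.simps by (rule spec[of _ ?refuters, THEN mp]) blast
  then show "\<not> R x ?refuters" by blast
next
  assume not_R: "\<not> R x ?refuters"
  have "\<exists>y\<in>V. forces W R v y A" if "V \<subseteq> W" and "R x V" for V
  proof (rule ccontr)
    assume "\<not> (\<exists>y\<in>V. forces W R v y A)"
    then have "V \<subseteq> ?refuters" using \<open>V \<subseteq> W\<close> by blast
    then show False using MN_frame_mono[OF mn \<open>R x V\<close>] not_R by blast
  qed
  then show "forces W R v x (Box A)" by simp
qed

lemma transitive_frame_iff:
  assumes mn: "MN_frame W R"
  shows "transitive_frame W R \<longleftrightarrow> (\<forall>x\<in>W. \<forall>S. S \<subseteq> W \<longrightarrow> R x {y \<in> W. R y S} \<longrightarrow> R x S)"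
proof
  assume trans: "transitive_frame W R"
  show "\<forall>x\<in>W. \<forall>S. S \<subseteq> W \<longrightarrow> R x {y \<in> W. R y S} \<longrightarrow> R x S"
  proof (intro ballI allI impI)
    fix x S assume "S \<subseteq> W" and R_x: "R x {y \<in> W. R y S}"
    then have "R x (\<Union>y \<in> {y \<in> W. R y S}. S)"
      using trans[unfolded transitive_frame_def, rule_format, of x _ "\<lambda>_. S"] by blast
    moreover have "(\<Union>y \<in> {y \<in> W. R y S}. S) = S"
      using MN_frame_nonempty[OF mn R_x] by blast
    ultimately show "R x S" by (simp only:)
  qed
next
  assume cond: "\<forall>x\<in>W. \<forall>S. S \<subseteq> W \<longrightarrow> R x {y \<in> W. R y S} \<longrightarrow> R x S"
  show "transitive_frame W R"
    unfolding transitive_frame_def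
  proof (intro allI impI)
    fix x V U assume asm: "R x V \<and> (\<forall>y\<in>V. U y \<subseteq> W \<and> R y (U y))"
    define S where "S = (\<Union>y\<in>V. U y)"
    have "S \<subseteq> W" using asm by (auto simp: S_def)
    have "V \<subseteq> {y \<in> W. R y S}"
    proof
      fix y assume "y \<in> V"
      then have "y \<in> W" and "R y (U y)" and "U y \<subseteq> S"
        using asm MN_frame_subset[OF mn] by (auto simp: S_def)
      then show "y \<in> {y \<in> W. R y S}"
        using MN_frame_mono[OF mn] \<open>S \<subseteq> W\<close> by blast
    qed
    then have "R x {y \<in> W. R y S}"
      using asm MN_frame_mono[OF mn] by blast
    moreover have "x \<in> W"
      using asm MN_frame_in_carrier[OF mn] by blast
    ultimately show "R x (\<Union>y\<in>V. U y)"
      using cond \<open>S \<subseteq> W\<close> by (simp add: S_def)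
  qed
qed

lemma valid_Box_imp_Box_Box_iff:
  assumes mn: "MN_frame W R"
  shows "valid_in_frame W R (Imp (Box (Var p)) (Box (Box (Var p))))
    \<longleftrightarrow> (\<forall>x\<in>W. \<forall>S. S \<subseteq> W \<longrightarrow> R x {y \<in> W. R y S} \<longrightarrow> R x S)"
proof -
  have "valid_in_frame W R (Imp (Box (Var p)) (Box (Box (Var p))))
      \<longleftrightarrow> (\<forall>v. \<forall>x\<in>W. R x {y \<in> W. R y {z \<in> W. z \<notin> v p}} \<longrightarrow> R x {z \<in> W. z \<notin> v p})"
    unfolding valid_in_frame_def
    by (auto simp: forces_Box_MN_frame[OF mn] simp del: forces.simps(4))
  also have "\<dots> \<longleftrightarrow> (\<forall>x\<in>W. \<forall>S. S \<subseteq> W \<longrightarrow> R x {y \<in> W. R y S} \<longrightarrow> R x S)"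
  proof (intro iffI allI ballI impI)
    fix x S
    assume valid: "\<forall>v. \<forall>x\<in>W. R x {y \<in> W. R y {z \<in> W. z \<notin> v p}} \<longrightarrow> R x {z \<in> W. z \<notin> v p}"
      and "x \<in> W" and "S \<subseteq> W" and "R x {y \<in> W. R y S}"
    moreover have "{z \<in> W. z \<notin> W - S} = S"
      using \<open>S \<subseteq> W\<close> by blast
    ultimately show "R x S"
      using bspec[OF spec[OF valid, of "\<lambda>_. W - S"] \<open>x \<in> W\<close>] by simp
  next
    fix v x
    assume cond: "\<forall>x\<in>W. \<forall>S. S \<subseteq> W \<longrightarrow> R x {y \<in> W. R y S} \<longrightarrow> R x S"
      and "x \<in> W"
    have "{z \<in> W. z \<notin> v p} \<subseteq> W" by blast
    then show "R x {y \<in> W. R y {z \<in> W. z \<notin> v p}} \<Longrightarrow> R x {z \<in> W. z \<notin> v p}"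
      using bspec[OF cond \<open>x \<in> W\<close>] by blast
  qed
  finally show ?thesis .
qed

lemma valid_not_Box_Bot_iff: "valid_in_frame W R (Neg (Box Bot)) \<longleftrightarrow> MNP_frame W R"
  unfolding valid_in_frame_def MNP_frame_def by auto

lemma valid_not_Box_and_Box_Neg_iff:
  assumes mn: "MN_frame W R"
  shows "valid_in_frame W R (Neg (Conj (Box (Var p)) (Box (Neg (Var p))))) \<longleftrightarrow> MND_frame W R"
proof -
  have "valid_in_frame W R (Neg (Conj (Box (Var p)) (Box (Neg (Var p)))))
      \<longleftrightarrow> (\<forall>v. \<forall>x\<in>W. R x {y \<in> W. y \<notin> v p} \<or> R x {y \<in> W. y \<in> v p})"
    unfolding valid_in_frame_def
    by (simp add: forces_Box_MN_frame[OF mn] del: forces.simps(4))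
  also have "\<dots> \<longleftrightarrow> MND_frame W R"
    unfolding MND_frame_def
  proof (intro iffI allI ballI impI)
    fix x S assume valid: "\<forall>v. \<forall>x\<in>W. R x {y \<in> W. y \<notin> v p} \<or> R x {y \<in> W. y \<in> v p}"
      and "x \<in> W" and "S \<subseteq> W"
    have "{y \<in> W. y \<notin> S} = W - S" and "{y \<in> W. y \<in> S} = S"
      using \<open>S \<subseteq> W\<close> by blast+
    then show "R x S \<or> R x (W - S)"
      using bspec[OF spec[OF valid, of "\<lambda>_. S"] \<open>x \<in> W\<close>] by auto
  next
    fix v x assume cond: "\<forall>x\<in>W. \<forall>S. S \<subseteq> W \<longrightarrow> R x S \<or> R x (W - S)" and "x \<in> W"
    have "{y \<in> W. y \<in> v p} \<subseteq> W" and "W - {y \<in> W. y \<in> v p} = {y \<in> W. y \<notin> v p}"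
      by blast+
    then show "R x {y \<in> W. y \<notin> v p} \<or> R x {y \<in> W. y \<in> v p}"
      using bspec[OF cond \<open>x \<in> W\<close>] by metis
  qed
  finally show ?thesis .
qed

theorem proposition3p4:
  fixes W :: "'w set" and R :: "'w \<Rightarrow> 'w set \<Rightarrow> bool" and p :: nat
  assumes "MN_frame W R"
  shows "(valid_in_frame W R (Imp (Box (Var p)) (Box (Box (Var p)))) \<longleftrightarrow> transitive_frame W R)
       \<and> (valid_in_frame W R (Neg (Box Bot)) \<longleftrightarrow> MNP_frame W R)
       \<and> (valid_in_frame W R (Neg (Conj (Box (Var p)) (Box (Neg (Var p))))) \<longleftrightarrow> MND_frame W R)"
  by (simp only: valid_Box_imp_Box_Box_iff[OF assms] transitive_frame_iff[OF assms]
      valid_not_Box_Bot_iff valid_not_Box_and_Box_Neg_iff[OF assms] simp_thms)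

end
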